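(* Consider a $k$-armed Bernoulli bandit in which the reward of arm $a\in\{1,\dots,k\}$ is distributed as $\mathrm{Bernoulli}(\theta_a)$ with unknown $\theta_a\in[0,1]$, and consider the stochastic-dominance Thompson sampling algorithm (SD\_TS) described below. Let $D$ denote the total variation distance. Then SD\_TS is $(2,0,0)$-subjectively fair with respect to $D$; that is, with probability $1$, for every round $t$ and every pair of arms $i,j$, $$D(\pi_t(i)\,\|\,\pi_t(j)) \le 2\, D(r_i(h^t)\,\|\,r_j(h^t)).$$
   Context: Algorithm SD\_TS: for each arm $a$ initialise $S_a=F_a=1/2$. In each round $t=1,2,\dots$: for each arm $a$, sample $\theta_a(t)\sim\mathrm{Beta}(S_a,F_a)$, then sample $\tilde r_a(t)\sim\mathrm{Bernoulli}(\theta_a(t))$; play $a_t=\arg\max_a \tilde r_a(t)$ (ties broken uniformly at random); observe the true reward $r_{a_t}(t)$ of the played arm and set $S_{a_t}\leftarrow S_{a_t}+1$ if $r_{a_t}(t)=1$, else $F_{a_t}\leftarrow F_{a_t}+1$. Notation: $h^t=(a_1,r_{a_1}(1),\dots,a_t,r_{a_t}(t))$ is the history; $\pi_t(i)$ is the probability (given the history) that the algorithm plays arm $i$ in round $t$. The decision maker's initial belief is the uninformed prior $\mathrm{Beta}(1/2,1/2)$ on each $\theta_i$, with posterior $\beta(\theta_i\mid h^t)$; the marginal (posterior predictive) reward distribution of arm $i$ is $r_i(h^t)=\int P(r_i\mid\theta_i)\,d\beta(\theta_i\mid h^t)$. For numbers $p,q\in[0,1]$, $D(p\|q)$ denotes the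 divergence between the Bernoulli distributions with parameters $p$ and $q$. Definition: a bandit process is $(\epsilon_1,\epsilon_2,\delta)$-subjectively fair w.r.t. a divergence $D$ ($\epsilon_1,\epsilon_2\ge0$, $0\le\delta\le1$) if with probability at least $1-\delta$, for every round $t$ and every pair of arms $i,j$, $D(\pi_t(i)\|\pi_t(j))\le \epsilon_1 D(r_i(h^t)\|r_j(h^t))+\epsilon_2$. *)

theory Defs
  imports "HOL-Probability.Probability"
begin

text \<open>Arms are 1..k. A history is a list of (played arm, observed reward) pairs.\<close>

definition succ_cnt :: "(nat \<times> bool) list \<Rightarrow> nat \<Rightarrow> nat" where
  "succ_cnt h a = length (filter (\<lambda>(b, r). b = a \<and> r) h)"

definition fail_cnt :: "(nat \<times> bool) list \<Rightarrow> nat \<Rightarrow> nat" where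
  "fail_cnt h a = length (filter (\<lambda>(b, r). b = a \<and> \<not> r) h)"

definition S_par :: "(nat \<times> bool) list \<Rightarrow> nat \<Rightarrow> real" where
  "S_par h a = 1/2 + real (succ_cnt h a)"

definition F_par :: "(nat \<times> bool) list \<Rightarrow> nat \<Rightarrow> real" where
  "F_par h a = 1/2 + real (fail_cnt h a)"

definition beta_dens :: "real \<Rightarrow> real \<Rightarrow> real \<Rightarrow> real" where
  "beta_dens S F \<theta> =
     (if 0 < \<theta> \<and> \<theta> < 1 then \<theta> powr (S - 1) * (1 - \<theta>) powr (F - 1) / Beta S F else 0)"

definition beta_measure :: "real \<Rightarrow> real \<Rightarrow> real measure" where
  "beta_measure S F = density lborel (\<lambda>\<theta>. ennreal (beta_dens S F \<theta>))"

definition sample_prob :: "real \<Rightarrow> real \<Rightarrow> real" where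
  "sample_prob S F =
     measure (beta_measure S F \<bind> (\<lambda>\<theta>. measure_pmf (bernoulli_pmf \<theta>))) {True}"

definition argmax_set :: "nat set \<Rightarrow> (nat \<Rightarrow> bool) \<Rightarrow> nat set" where
  "argmax_set A x = {a \<in> A. \<forall>b\<in>A. x b \<le> x a}"

text \<open>Distribution of the arm played by SD_TS given history h: the sampled rewards are
  independent across arms; ties broken uniformly at random.\<close>
definition play_pmf :: "nat \<Rightarrow> (nat \<times> bool) list \<Rightarrow> nat pmf" where
  "play_pmf k h =
     Pi_pmf {1..k} False (\<lambda>a. bernoulli_pmf (sample_prob (S_par h a) (F_par h a)))
       \<bind> (\<lambda>x. pmf_of_set (argmax_set {1..k} x))"

definition play_prob :: "nat \<Rightarrow> (nat \<times> bool) list \<Rightarrow> nat \<Rightarrow> real" where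
  "play_prob k h i = pmf (play_pmf k h) i"

definition lik :: "(nat \<times> bool) list \<Rightarrow> nat \<Rightarrow> real \<Rightarrow> real" where
  "lik h i \<theta> = \<theta> ^ succ_cnt h i * (1 - \<theta>) ^ fail_cnt h i"

definition post_dens :: "(nat \<times> bool) list \<Rightarrow> nat \<Rightarrow> real \<Rightarrow> real" where
  "post_dens h i \<theta> = lik h i \<theta> * beta_dens (1/2) (1/2) \<theta> /
      (LINT \<phi>|lborel. lik h i \<phi> * beta_dens (1/2) (1/2) \<phi>)"

definition pred_prob :: "(nat \<times> bool) list \<Rightarrow> nat \<Rightarrow> real" where
  "pred_prob h i = (LINT \<theta>|lborel. \<theta> * post_dens h i \<theta>)"

definition tv_bern :: "real \<Rightarrow> real \<Rightarrow> real" where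
  "tv_bern p q = (1/2) * (\<Sum>b\<in>UNIV. \<bar>pmf (bernoulli_pmf p) b - pmf (bernoulli_pmf q) b\<bar>)"

end

theory Submission
  imports Defs "HOL-Combinatorics.Transposition"
begin

(*
  The posterior of theta_i under the prior Beta(1/2,1/2) is Beta(S_i,F_i), which is exactly the
  distribution SD_TS samples theta_i from. Hence the posterior predictive probability r_i(h) and
  the probability that the sampled reward of arm i is 1 coincide: both are the posterior mean
  p_i = S_i / (S_i + F_i).
  Condition on the sampled rewards of all arms other than i and j, and let e(a,b) be the
  probability of playing i when i samples a and j samples b. Exchanging the roles of i and j
  gives pi(i) - pi(j) = (p_i - p_j) (e(1,0) - e(0,1)), so |pi(i) - pi(j)| <= |p_i - p_j|.
  As the total variation distance of two Bernoulli distributions is the difference of their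
  parameters, the fairness bound holds even with constant 1 in place of 2.
*)

definition beta_kernel :: "real \<Rightarrow> real \<Rightarrow> real \<Rightarrow> real" where
  "beta_kernel a b t = (if 0 < t \<and> t < 1 then t powr (a - 1) * (1 - t) powr (b - 1) else 0)"

lemma borel_measurable_beta_kernel [measurable]: "beta_kernel a b \<in> borel_measurable borel"
  unfolding beta_kernel_def by measurable

lemma beta_kernel_nonneg: "0 \<le> beta_kernel a b t"
  by (simp add: beta_kernel_def)

lemma times_beta_kernel: "t * beta_kernel a b t = beta_kernel (a + 1) b t"
  using powr_add[of t 1 "a - 1"] by (simp add: beta_kernel_def)

lemma has_integral_beta_kernel:
  assumes "a > 0" "b > 0"
  shows "(beta_kernel a b has_integral Beta a b) UNIV"
proof -
  have "((\<lambda>t. if t \<in> {0..1} then t powr (a - 1) * (1 - t) powr (b - 1) else 0)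
      has_integral Beta a b) UNIV"
    unfolding has_integral_restrict_UNIV by (rule has_integral_Beta_real[OF assms])
  moreover have "(\<lambda>t. if t \<in> {0..1} then t powr (a - 1) * (1 - t) powr (b - 1) else 0)
      = beta_kernel a b"
    by (auto simp: beta_kernel_def fun_eq_iff)
  ultimately show ?thesis
    by simp
qed

lemma Beta_real_pos: "a > 0 \<Longrightarrow> b > 0 \<Longrightarrow> Beta a b > (0::real)"
  by (simp add: Beta_def Gamma_real_pos)

lemma Beta_plus1_left_div:
  assumes "a > 0" "b > (0::real)"
  shows "Beta (a + 1) b / Beta a b = a / (a + b)"
proof -
  have "a \<notin> \<int>\<^sub>\<le>\<^sub>0"
    using assms(1) nonpos_Ints_nonpos by force
  then have "(a + b) * Beta (a + 1) b = a * Beta a b"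
    by (rule Beta_plus1_left)
  then show ?thesis
    using Beta_real_pos[OF assms] assms by (simp add: field_simps)
qed

lemma beta_dens_eq: "beta_dens a b t = beta_kernel a b t / Beta a b"
  by (simp add: beta_dens_def beta_kernel_def)

lemma nn_integral_beta_kernel_div:
  assumes "a > 0" "b > 0" "c > 0"
  shows "(\<integral>\<^sup>+t. ennreal (beta_kernel a b t / c) \<partial>lborel) = ennreal (Beta a b / c)"
  using assms beta_kernel_nonneg has_integral_divide[OF has_integral_beta_kernel[OF assms(1,2)]]
  by (intro nn_integral_has_integral_lborel) auto

lemma integral_beta_kernel:
  assumes "a > 0" "b > 0"
  shows "integral\<^sup>L lborel (beta_kernel a b) = Beta a b"
  using assms Beta_real_pos[OF assms] beta_kernel_nonneg nn_integral_beta_kernel_div[OF assms, of 1]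
  by (subst integral_eq_nn_integral) simp_all

lemma S_par_pos: "S_par h a > 0"
  by (simp add: S_par_def)

lemma F_par_pos: "F_par h a > 0"
  by (simp add: F_par_def)

lemma lik_times_prior:
  "lik h i t * beta_dens (1/2) (1/2) t
     = beta_kernel (S_par h i) (F_par h i) t / Beta (1/2) (1/2)"
proof (cases "0 < t \<and> t < 1")
  case True
  have "t ^ n * t powr c = t powr (real n + c)"
    and "(1 - t) ^ n * (1 - t) powr c = (1 - t) powr (real n + c)" for n c
    using True by (simp_all add: powr_add powr_realpow)
  then show ?thesis
    using True by (simp add: lik_def beta_dens_def beta_kernel_def S_par_def F_par_def algebra_simps)
qed (auto simp: lik_def beta_dens_def beta_kernel_def)

lemma pred_prob_eq: "pred_prob h i = S_par h i / (S_par h i + F_par h i)"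
proof -
  let ?S = "S_par h i" and ?F = "F_par h i" and ?B = "Beta (1/2) (1/2) :: real"
  have B: "?B > 0"
    by (rule Beta_real_pos) simp_all
  define Z where "Z = (LINT t|lborel. lik h i t * beta_dens (1/2) (1/2) t)"
  have Z: "Z = Beta ?S ?F / ?B"
    unfolding Z_def lik_times_prior using integral_beta_kernel S_par_pos F_par_pos by simp
  have "Z > 0"
    using Z Beta_real_pos[OF S_par_pos F_par_pos] B by simp
  have "t * post_dens h i t = beta_kernel (?S + 1) ?F t / (?B * Z)" for t
    unfolding post_dens_def Z_def[symmetric] by (simp add: lik_times_prior times_beta_kernel[symmetric])
  then have "pred_prob h i = Beta (?S + 1) ?F / (?B * Z)"
    unfolding pred_prob_def using S_par_pos[of h i] by (simp add: integral_beta_kernel F_par_pos)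
  also have "\<dots> = Beta (?S + 1) ?F / Beta ?S ?F"
    using B by (simp add: Z)
  finally show ?thesis
    by (simp add: Beta_plus1_left_div S_par_pos F_par_pos)
qed

lemma pmf_bernoulli_pmf_eq:
  "pmf (bernoulli_pmf p) b = (if b then min 1 (max 0 p) else 1 - min 1 (max 0 p))"
  by (simp add: bernoulli_pmf.rep_eq)

lemma borel_measurable_pmf_bernoulli_pmf [measurable]:
  "(\<lambda>p. pmf (bernoulli_pmf p) b) \<in> borel_measurable borel"
  unfolding pmf_bernoulli_pmf_eq by measurable

lemma measurable_bernoulli_pmf:
  "(\<lambda>p. measure_pmf (bernoulli_pmf p)) \<in> borel \<rightarrow>\<^sub>M subprob_algebra (count_space UNIV)"
proof (rule measurable_subprob_algebra)
  fix A :: "bool set"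
  have "(\<lambda>p. emeasure (measure_pmf (bernoulli_pmf p)) A)
      = (\<lambda>p. \<Sum>b\<in>A. ennreal (pmf (bernoulli_pmf p) b))"
    by (simp add: emeasure_measure_pmf_finite)
  then show "(\<lambda>p. emeasure (measure_pmf (bernoulli_pmf p)) A) \<in> borel_measurable borel"
    by simp
qed (simp_all add: subprob_space_measure_pmf)

lemma sample_prob_eq:
  assumes S: "S > 0" and F: "F > 0"
  shows "sample_prob S F = S / (S + F)"
proof -
  let ?M = "beta_measure S F"
  have "sets ?M = sets borel"
    by (simp add: beta_measure_def)
  then have K:
    "(\<lambda>t. measure_pmf (bernoulli_pmf t)) \<in> ?M \<rightarrow>\<^sub>M subprob_algebra (count_space UNIV)"
    using measurable_bernoulli_pmf measurable_cong_sets by blast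
  have dens: "ennreal (beta_dens S F t) * ennreal (pmf (bernoulli_pmf t) True)
      = ennreal (beta_kernel (S + 1) F t / Beta S F)" for t
  proof (cases "0 < t \<and> t < 1")
    case True
    then have "beta_dens S F t * pmf (bernoulli_pmf t) True = beta_kernel (S + 1) F t / Beta S F"
      by (simp add: beta_dens_eq times_beta_kernel[symmetric])
    then show ?thesis
      using Beta_real_pos[OF S F] beta_kernel_nonneg by (simp add: beta_dens_eq ennreal_mult'[symmetric])
  qed (auto simp: beta_dens_def beta_kernel_def)
  have "emeasure (?M \<bind> (\<lambda>t. measure_pmf (bernoulli_pmf t))) {True}
      = (\<integral>\<^sup>+t. ennreal (pmf (bernoulli_pmf t) True) \<partial>?M)"
    by (subst emeasure_bind[OF _ K]) (simp_all add: beta_measure_def emeasure_pmf_single)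
  also have "\<dots> = (\<integral>\<^sup>+t. ennreal (beta_kernel (S + 1) F t / Beta S F) \<partial>lborel)"
    unfolding beta_measure_def dens[symmetric]
    by (rule nn_integral_density) (simp_all add: beta_dens_eq)
  also have "\<dots> = ennreal (Beta (S + 1) F / Beta S F)"
    using S F Beta_real_pos[OF S F] by (simp add: nn_integral_beta_kernel_div)
  finally show ?thesis
    using S F Beta_real_pos[OF S F] Beta_real_pos[of "S + 1" F]
    by (simp add: sample_prob_def measure_def Beta_plus1_left_div)
qed

lemma finite_argmax_set: "finite A \<Longrightarrow> finite (argmax_set A x)"
  by (simp add: argmax_set_def)

lemma argmax_set_nonempty:
  assumes "finite A" "A \<noteq> {}"
  shows "argmax_set A x \<noteq> {}"
proof (cases "\<exists>a\<in>A. x a")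
  case True
  then obtain a where "a \<in> A" "x a"
    by blast
  then have "a \<in> argmax_set A x"
    by (auto simp: argmax_set_def)
  then show ?thesis
    by blast
next
  case False
  obtain a where "a \<in> A"
    using assms by blast
  then have "a \<in> argmax_set A x"
    using False by (auto simp: argmax_set_def le_bool_def)
  then show ?thesis
    by blast
qed

lemma argmax_set_comp_transpose:
  assumes "i \<in> A" "j \<in> A"
  shows "argmax_set A (x \<circ> Transposition.transpose i j)
           = Transposition.transpose i j ` argmax_set A x"
proof -
  let ?\<tau> = "Transposition.transpose i j"
  have \<tau>A: "?\<tau> b \<in> A \<longleftrightarrow> b \<in> A" for b
    using assms by (cases "b = i"; cases "b = j") auto
  then have "(\<forall>b\<in>A. x (?\<tau> b) \<le> x c) \<longleftrightarrow> (\<forall>b\<in>A. x b \<le> x c)" for c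
    by (metis transpose_involutory)
  then have "a \<in> argmax_set A (x \<circ> ?\<tau>) \<longleftrightarrow> ?\<tau> a \<in> argmax_set A x" for a
    using \<tau>A by (simp add: argmax_set_def)
  then show ?thesis
    by (auto simp: image_iff) (metis transpose_involutory)
qed

lemma pmf_argmax_set_comp_transpose:
  assumes "finite A" "i \<in> A" "j \<in> A"
  shows "pmf (pmf_of_set (argmax_set A (x \<circ> Transposition.transpose i j))) i
           = pmf (pmf_of_set (argmax_set A x)) j"
proof -
  have "argmax_set A x \<noteq> {}"
    using assms argmax_set_nonempty by blast
  then have "pmf_of_set (argmax_set A (x \<circ> Transposition.transpose i j))
          = map_pmf (Transposition.transpose i j) (pmf_of_set (argmax_set A x))"
    using assms by (simp add: argmax_set_comp_transpose map_pmf_of_set_inj finite_argmax_set)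
  then show ?thesis
    by (metis pmf_map_inj' inj_transpose transpose_apply_second)
qed

lemma fun_upd_swap_comp_transpose:
  "i \<noteq> j \<Longrightarrow> y(j := a, i := b) = y(j := b, i := a) \<circ> Transposition.transpose i j"
  by (auto simp: fun_eq_iff transpose_def)

lemma abs_pmf_argmax_Pi_bernoulli_diff_le:
  fixes p :: "nat \<Rightarrow> real"
  assumes "finite A" "i \<in> A" "j \<in> A" "i \<noteq> j"
    and "p i \<in> {0..1}" "p j \<in> {0..1}"
  defines "P \<equiv> Pi_pmf A False (\<lambda>a. bernoulli_pmf (p a)) \<bind> (\<lambda>x. pmf_of_set (argmax_set A x))"
  shows "\<bar>pmf P i - pmf P j\<bar> \<le> \<bar>p i - p j\<bar>"
proof -
  define R where "R = A - {i, j}"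
  have A: "A = insert i (insert j R)" "i \<notin> insert j R" "j \<notin> R" "finite R"
    using assms(1-4) by (auto simp: R_def)
  define Q where "Q = Pi_pmf R False (\<lambda>a. bernoulli_pmf (p a))"
  define E where "E a b = Q \<bind> (\<lambda>y. pmf_of_set (argmax_set A (y(j := b, i := a))))" for a b
  have P: "P = bernoulli_pmf (p i) \<bind> (\<lambda>a. bernoulli_pmf (p j) \<bind> (\<lambda>b. E a b))"
    unfolding P_def E_def Q_def
    by (subst (1) A(1))
      (simp add: Pi_pmf_insert'[OF _ A(2)] Pi_pmf_insert'[OF A(4,3)] A(4) bind_assoc_pmf bind_return_pmf)
  have E_swap: "pmf (E a b) j = pmf (E b a) i" for a b
    unfolding E_def pmf_bind
    by (simp add: fun_upd_swap_comp_transpose[OF \<open>i \<noteq> j\<close>, of _ a b]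
        pmf_argmax_set_comp_transpose[OF assms(1-3)])
  have pmf_P: "pmf P x = p i * (p j * pmf (E True True) x + (1 - p j) * pmf (E True False) x)
      + (1 - p i) * (p j * pmf (E False True) x + (1 - p j) * pmf (E False False) x)" for x
    unfolding P pmf_bind using assms(5,6) by (simp add: algebra_simps)
  have "pmf P i - pmf P j = (p i - p j) * (pmf (E True False) i - pmf (E False True) i)"
    unfolding pmf_P E_swap by (simp add: algebra_simps)
  moreover have "\<bar>pmf (E True False) i - pmf (E False True) i\<bar> \<le> 1"
    using pmf_le_1 pmf_nonneg by (smt (verit))
  ultimately show ?thesis
    by (simp add: abs_mult mult_left_le)
qed

lemma tv_bern_eq_abs_diff:
  "p \<in> {0..1} \<Longrightarrow> q \<in> {0..1} \<Longrightarrow> tv_bern p q = \<bar>p - q\<bar>"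
  by (simp add: tv_bern_def UNIV_bool)

theorem theorem3p1:
  fixes k :: nat and h :: "(nat \<times> bool) list" and i j :: nat
  assumes "k \<ge> 1"
    and "set (map fst h) \<subseteq> {1..k}"
    and "i \<in> {1..k}" and "j \<in> {1..k}"
  shows "tv_bern (play_prob k h i) (play_prob k h j)
           \<le> 2 * tv_bern (pred_prob h i) (pred_prob h j)"
proof (cases "i = j")
  case False
  define p where "p a = S_par h a / (S_par h a + F_par h a)" for a
  have p01: "p a \<in> {0..1}" for a
    using S_par_pos[of h a] F_par_pos[of h a] by (simp add: p_def)
  have "play_pmf k h
      = Pi_pmf {1..k} False (\<lambda>a. bernoulli_pmf (p a)) \<bind> (\<lambda>x. pmf_of_set (argmax_set {1..k} x))"
    by (simp add: play_pmf_def p_def sample_prob_eq S_par_pos F_par_pos)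
  then have "\<bar>play_prob k h i - play_prob k h j\<bar> \<le> \<bar>p i - p j\<bar>"
    unfolding play_prob_def
    using abs_pmf_argmax_Pi_bernoulli_diff_le[of "{1..k}" i j p] assms(3,4) False p01 by simp
  moreover have "tv_bern (play_prob k h i) (play_prob k h j)
      = \<bar>play_prob k h i - play_prob k h j\<bar>"
    by (simp add: tv_bern_eq_abs_diff play_prob_def pmf_le_1)
  moreover have "tv_bern (pred_prob h i) (pred_prob h j) = \<bar>p i - p j\<bar>"
    using p01 by (simp add: tv_bern_eq_abs_diff pred_prob_eq p_def[symmetric])
  ultimately show ?thesis
    by linarith
qed (simp add: tv_bern_def)

end
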